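(* Let $\alpha>0>\beta$ with $|\beta|<\alpha$, and put $\delta=\left(\frac{\alpha-\beta}{\alpha+\beta}\right)^2>1$, $K=\frac{2\alpha}{(\alpha+\beta)^2}$, $M=\delta^{\frac{1}{1-\delta}}-\delta^{\frac{\delta}{1-\delta}}$ and $T_M=\frac{\ln\delta}{K(\delta-1)}$. Let $\omega>0$, $\gamma>0$, $k_1>0$, and for $T\ge 0$, $s\in\mathbb{R}$, $y>0$ let $$\mathcal{G}_T(s,y)=\left(s-\frac{\ln y}{K}-T,\; y^{\delta}+\gamma\bigl(1+k_1\sin(2\omega s)\bigr)\right).$$ If $\gamma=M/(1+k_1)$ or $\gamma=M/(1-k_1)$, and $T=T_M$, then at every fixed point $(s,y)$ of $\mathcal{G}_T$ the derivative $D\mathcal{G}_T(s,y)$ has $1$ as a double eigenvalue and is not the identity. Moreover, these are the only situations in which $D\mathcal{G}_T(s,y)$ has a double eigenvalue $1$ at a fixed point $(s,y)$ of $\mathcal{G}_T$. *)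

theory Defs
  imports "HOL-Analysis.Analysis"
begin

definition dlt :: "real \<Rightarrow> real \<Rightarrow> real" where
  "dlt \<alpha> \<beta> = ((\<alpha> - \<beta>) / (\<alpha> + \<beta>))^2"

definition Kc :: "real \<Rightarrow> real \<Rightarrow> real" where
  "Kc \<alpha> \<beta> = 2 * \<alpha> / (\<alpha> + \<beta>)^2"

definition Mc :: "real \<Rightarrow> real \<Rightarrow> real" where
  "Mc \<alpha> \<beta> = dlt \<alpha> \<beta> powr (1 / (1 - dlt \<alpha> \<beta>))
              - dlt \<alpha> \<beta> powr (dlt \<alpha> \<beta> / (1 - dlt \<alpha> \<beta>))"

definition TM :: "real \<Rightarrow> real \<Rightarrow> real" where
  "TM \<alpha> \<beta> = ln (dlt \<alpha> \<beta>) / (Kc \<alpha> \<beta> * (dlt \<alpha> \<beta> - 1))"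

definition GT :: "real \<Rightarrow> real \<Rightarrow> real \<Rightarrow> real \<Rightarrow> real \<Rightarrow> real \<Rightarrow> real^2 \<Rightarrow> real^2" where
  "GT \<alpha> \<beta> \<omega> \<gamma> k1 T z =
     vector [ z$1 - ln (z$2) / Kc \<alpha> \<beta> - T,
              (z$2) powr (dlt \<alpha> \<beta>) + \<gamma> * (1 + k1 * sin (2 * \<omega> * z$1)) ]"

definition double_eig_one :: "real^2^2 \<Rightarrow> bool" where
  "double_eig_one A \<longleftrightarrow> (\<forall>x::real. det (x *\<^sub>R mat 1 - A) = (x - 1)^2)"

end

theory Submission
  imports Defs
begin

(* At a point z = (s, y) with y > 0 the Jacobian of G_T is
     [[1, -1/(K y)], [2 omega gamma k1 cos (2 omega s), delta y^(delta - 1)]].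
   Its upper right entry never vanishes, so it is never the identity, and 1 is a double
   eigenvalue iff delta y^(delta - 1) = 1 and cos (2 omega s) = 0. The first condition says
   y = delta^(1/(1 - delta)); at a fixed point ln y = - K T, so this is equivalent to T = T_M,
   and then the second fixed point equation becomes gamma (1 + k1 sin (2 omega s)) = y - y^delta = M.
   Given that, cos (2 omega s) = 0 means sin (2 omega s) = 1 or -1, i.e. gamma = M/(1 + k1) or
   gamma = M/(1 - k1). *)

lemma double_eig_one_iff_trace_det:
  "double_eig_one (A :: real^2^2) \<longleftrightarrow> trace A = 2 \<and> det A = 1"
proof -
  have char: "det (x *\<^sub>R mat 1 - A) = x\<^sup>2 - trace A * x + det A" for x
    by (simp add: det_2 trace_def UNIV_2 mat_def power2_eq_square algebra_simps)
  show ?thesis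
  proof
    assume "double_eig_one A"
    then have "x\<^sup>2 - trace A * x + det A = (x - 1)\<^sup>2" for x
      by (simp add: double_eig_one_def char)
    from this[of 0] this[of 1] show "trace A = 2 \<and> det A = 1" by simp
  qed (simp add: double_eig_one_def char power2_diff)
qed

lemma double_eig_one_unit_corner_iff:
  "double_eig_one (vector [vector [1, p], vector [q, r]] :: real^2^2) \<longleftrightarrow> r = 1 \<and> p * q = 0"
  by (auto simp: double_eig_one_iff_trace_det trace_def UNIV_2 det_2)

definition unit_slope_point :: "real \<Rightarrow> real" where
  "unit_slope_point d = d powr (1 / (1 - d))"

lemma ln_unit_slope_point: "d > 0 \<Longrightarrow> ln (unit_slope_point d) = ln d / (1 - d)"
  by (simp add: unit_slope_point_def ln_powr)

lemma eq_unit_slope_point_iff_ln: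
  "d > 0 \<Longrightarrow> y > 0 \<Longrightarrow> y = unit_slope_point d \<longleftrightarrow> ln y = ln d / (1 - d)"
  using ln_unit_slope_point[of d] by (simp add: unit_slope_point_def ln_inj_iff[symmetric])

lemma slope_eq_1_iff_unit_slope_point:
  fixes d y :: real
  assumes "d > 0" "d \<noteq> 1" "y > 0"
  shows "d * y powr (d - 1) = 1 \<longleftrightarrow> y = unit_slope_point d"
proof -
  have "d * y powr (d - 1) = exp (ln d + (d - 1) * ln y)"
    using assms by (simp add: powr_def exp_add)
  then have "d * y powr (d - 1) = 1 \<longleftrightarrow> ln d + (d - 1) * ln y = 0" by simp
  also have "\<dots> \<longleftrightarrow> ln y = ln d / (1 - d)" using assms(2) by (auto simp: field_simps)
  finally show ?thesis using eq_unit_slope_point_iff_ln assms by simp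
qed

lemma unit_slope_point_powr_less:
  assumes "d > 1"
  shows "unit_slope_point d powr d < unit_slope_point d"
proof -
  have "unit_slope_point d < d powr 0"
    unfolding unit_slope_point_def using assms by (intro powr_less_mono) (auto simp: field_simps)
  then have "unit_slope_point d < 1" using assms by simp
  then have "unit_slope_point d powr d < unit_slope_point d powr 1"
    using assms by (intro powr_less_mono') (auto simp: unit_slope_point_def)
  then show ?thesis by (simp add: unit_slope_point_def)
qed

lemma
  fixes \<alpha> \<beta> :: real
  assumes "\<alpha> > 0" "0 > \<beta>" "\<bar>\<beta>\<bar> < \<alpha>"
  shows Kc_pos: "Kc \<alpha> \<beta> > 0" and dlt_gt_1: "dlt \<alpha> \<beta> > 1"
proof -
  have "\<alpha> + \<beta> > 0" using assms by auto
  then show "Kc \<alpha> \<beta> > 0" using assms by (simp add: Kc_def)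
  have "(\<alpha> - \<beta>) / (\<alpha> + \<beta>) > 1" using \<open>\<alpha> + \<beta> > 0\<close> assms by (simp add: field_simps)
  then show "dlt \<alpha> \<beta> > 1" unfolding dlt_def by (simp add: one_less_power)
qed

lemma Mc_eq_unit_slope_point:
  "dlt \<alpha> \<beta> > 0 \<Longrightarrow> Mc \<alpha> \<beta> = unit_slope_point (dlt \<alpha> \<beta>) - unit_slope_point (dlt \<alpha> \<beta>) powr dlt \<alpha> \<beta>"
  by (simp add: Mc_def unit_slope_point_def powr_powr)

lemma has_derivative_vec_nth [derivative_intros]:
  "((\<lambda>x::real^'n. x$i) has_derivative (\<lambda>x. x$i)) F"
  by (rule bounded_linear_imp_has_derivative) (rule bounded_linear_vec_nth)

lemma vector_2_eq_axis: "vector [a, b] = a *\<^sub>R axis 1 1 + b *\<^sub>R (axis 2 1 :: real^2)"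
  by (simp add: vec_eq_iff forall_2 axis_def)

lemma GT_has_derivative:
  fixes z :: "real^2"
  assumes "z$2 > 0" "Kc \<alpha> \<beta> \<noteq> 0"
  shows "(GT \<alpha> \<beta> \<omega> \<gamma> k1 T has_derivative (\<lambda>h. vector
      [h$1 - h$2 / (z$2 * Kc \<alpha> \<beta>),
       2 * \<omega> * \<gamma> * k1 * cos (2 * \<omega> * z$1) * h$1 + dlt \<alpha> \<beta> * z$2 powr (dlt \<alpha> \<beta> - 1) * h$2])) (at z)"
  unfolding GT_def vector_2_eq_axis
  using assms
  by (auto intro!: derivative_eq_intros ext simp: vec_eq_iff forall_2 axis_def field_simps powr_diff)

lemma matrix_GT_derivative:
  fixes z :: "real^2"
  assumes "z$2 > 0" "Kc \<alpha> \<beta> \<noteq> 0" and "(GT \<alpha> \<beta> \<omega> \<gamma> k1 T has_derivative L) (at z)"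
  shows "matrix L = vector
      [vector [1, - 1 / (z$2 * Kc \<alpha> \<beta>)],
       vector [2 * \<omega> * \<gamma> * k1 * cos (2 * \<omega> * z$1), dlt \<alpha> \<beta> * z$2 powr (dlt \<alpha> \<beta> - 1)]]"
  using has_derivative_unique[OF assms(3) GT_has_derivative[OF assms(1,2)]]
  by (simp add: matrix_def vec_eq_iff forall_2 axis_def)

lemma matrix_GT_derivative_neq_id:
  fixes z :: "real^2"
  assumes "z$2 > 0" "Kc \<alpha> \<beta> \<noteq> 0" and "(GT \<alpha> \<beta> \<omega> \<gamma> k1 T has_derivative L) (at z)"
  shows "matrix L \<noteq> mat 1"
  using assms by (simp add: matrix_GT_derivative vec_eq_iff forall_2 mat_def)

lemma GT_fixed_point_iff:
  assumes "Kc \<alpha> \<beta> \<noteq> 0"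
  shows "GT \<alpha> \<beta> \<omega> \<gamma> k1 T z = z \<longleftrightarrow>
    ln (z$2) = - Kc \<alpha> \<beta> * T \<and> z$2 powr dlt \<alpha> \<beta> + \<gamma> * (1 + k1 * sin (2 * \<omega> * z$1)) = z$2"
  using assms by (auto simp: GT_def vec_eq_iff forall_2 field_simps)

lemma GT_fixed_point_eq_unit_slope_point_iff:
  assumes "Kc \<alpha> \<beta> \<noteq> 0" "dlt \<alpha> \<beta> > 0" "dlt \<alpha> \<beta> \<noteq> 1"
    and "z$2 > 0" "GT \<alpha> \<beta> \<omega> \<gamma> k1 T z = z"
  shows "z$2 = unit_slope_point (dlt \<alpha> \<beta>) \<longleftrightarrow> T = TM \<alpha> \<beta>"
  using assms by (auto simp: GT_fixed_point_iff eq_unit_slope_point_iff_ln TM_def field_simps)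

lemma GT_fixed_point_forcing_eq_Mc:
  assumes "Kc \<alpha> \<beta> \<noteq> 0" "dlt \<alpha> \<beta> > 0"
    and "GT \<alpha> \<beta> \<omega> \<gamma> k1 T z = z" "z$2 = unit_slope_point (dlt \<alpha> \<beta>)"
  shows "\<gamma> * (1 + k1 * sin (2 * \<omega> * z$1)) = Mc \<alpha> \<beta>"
  using assms by (simp add: GT_fixed_point_iff Mc_eq_unit_slope_point)

lemma double_eig_one_GT_derivative_iff:
  fixes z :: "real^2"
  assumes "z$2 > 0" "Kc \<alpha> \<beta> \<noteq> 0" "dlt \<alpha> \<beta> > 0" "dlt \<alpha> \<beta> \<noteq> 1"
    and "\<omega> \<noteq> 0" "\<gamma> \<noteq> 0" "k1 \<noteq> 0"
    and "(GT \<alpha> \<beta> \<omega> \<gamma> k1 T has_derivative L) (at z)"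
  shows "double_eig_one (matrix L) \<longleftrightarrow> z$2 = unit_slope_point (dlt \<alpha> \<beta>) \<and> cos (2 * \<omega> * z$1) = 0"
  using assms
  by (simp add: matrix_GT_derivative double_eig_one_unit_corner_iff slope_eq_1_iff_unit_slope_point)

lemma cos_eq_0_iff_extremal_forcing:
  fixes \<gamma> k M x :: real
  assumes "\<gamma> \<noteq> 0" "k \<noteq> 0" "M \<noteq> 0" and forcing: "\<gamma> * (1 + k * sin x) = M"
  shows "cos x = 0 \<longleftrightarrow> \<gamma> = M / (1 + k) \<or> \<gamma> = M / (1 - k)"
proof -
  have sin_eq_iff: "sin x = s \<longleftrightarrow> \<gamma> = M / (1 + k * s)" for s
  proof -
    have "sin x = s \<longleftrightarrow> \<gamma> * (1 + k * s) = M"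
      using forcing assms(1,2) by auto
    also have "\<dots> \<longleftrightarrow> \<gamma> = M / (1 + k * s)"
      using assms(1,3) by (cases "1 + k * s = 0") (auto simp: field_simps)
    finally show ?thesis .
  qed
  have "cos x = 0 \<longleftrightarrow> sin x = 1 \<or> sin x = - 1"
    using sin_squared_eq[of x] by (auto simp: power2_eq_1_iff)
  then show ?thesis
    using sin_eq_iff[of 1] sin_eq_iff[of "- 1"] by simp
qed

theorem proposition10:
  fixes \<alpha> \<beta> \<omega> \<gamma> k1 :: real
  assumes "\<alpha> > 0" "0 > \<beta>" "\<bar>\<beta>\<bar> < \<alpha>"
      and "\<omega> > 0" "\<gamma> > 0" "k1 > 0"
  shows "((\<gamma> = Mc \<alpha> \<beta> / (1 + k1) \<or> \<gamma> = Mc \<alpha> \<beta> / (1 - k1)) \<longrightarrow>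
            (\<forall>z L. z$2 > 0 \<longrightarrow> GT \<alpha> \<beta> \<omega> \<gamma> k1 (TM \<alpha> \<beta>) z = z \<longrightarrow>
                   (GT \<alpha> \<beta> \<omega> \<gamma> k1 (TM \<alpha> \<beta>) has_derivative L) (at z) \<longrightarrow>
                   double_eig_one (matrix L) \<and> matrix L \<noteq> mat 1))
       \<and> (\<forall>T z L. T \<ge> 0 \<longrightarrow> z$2 > 0 \<longrightarrow> GT \<alpha> \<beta> \<omega> \<gamma> k1 T z = z \<longrightarrow>
                   (GT \<alpha> \<beta> \<omega> \<gamma> k1 T has_derivative L) (at z) \<longrightarrow>
                   double_eig_one (matrix L) \<longrightarrow>
                   ((\<gamma> = Mc \<alpha> \<beta> / (1 + k1) \<or> \<gamma> = Mc \<alpha> \<beta> / (1 - k1)) \<and> T = TM \<alpha> \<beta>))"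
proof -
  have K: "Kc \<alpha> \<beta> \<noteq> 0" and d: "dlt \<alpha> \<beta> > 1"
    using Kc_pos[OF assms(1-3)] dlt_gt_1[OF assms(1-3)] by auto
  have M: "Mc \<alpha> \<beta> \<noteq> 0"
    using unit_slope_point_powr_less[OF d] d by (simp add: Mc_eq_unit_slope_point)
  have nonzero: "\<omega> \<noteq> 0" "\<gamma> \<noteq> 0" "k1 \<noteq> 0" using assms by auto
  have "double_eig_one (matrix L) \<and> matrix L \<noteq> mat 1"
    if critical: "\<gamma> = Mc \<alpha> \<beta> / (1 + k1) \<or> \<gamma> = Mc \<alpha> \<beta> / (1 - k1)"
      and z: "z$2 > 0" and fixed: "GT \<alpha> \<beta> \<omega> \<gamma> k1 (TM \<alpha> \<beta>) z = z"
      and L: "(GT \<alpha> \<beta> \<omega> \<gamma> k1 (TM \<alpha> \<beta>) has_derivative L) (at z)" for z L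
  proof -
    have y: "z$2 = unit_slope_point (dlt \<alpha> \<beta>)"
      using GT_fixed_point_eq_unit_slope_point_iff[OF K _ _ z fixed] d by simp
    have "cos (2 * \<omega> * z$1) = 0"
      using cos_eq_0_iff_extremal_forcing[OF nonzero(2,3) M] GT_fixed_point_forcing_eq_Mc[OF K _ fixed y]
        critical d by simp
    then show ?thesis
      using y d double_eig_one_GT_derivative_iff[OF z K _ _ nonzero L]
        matrix_GT_derivative_neq_id[OF z K L] by simp
  qed
  moreover have "(\<gamma> = Mc \<alpha> \<beta> / (1 + k1) \<or> \<gamma> = Mc \<alpha> \<beta> / (1 - k1)) \<and> T = TM \<alpha> \<beta>"
    if z: "z$2 > 0" and fixed: "GT \<alpha> \<beta> \<omega> \<gamma> k1 T z = z"
      and L: "(GT \<alpha> \<beta> \<omega> \<gamma> k1 T has_derivative L) (at z)"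
      and double: "double_eig_one (matrix L)" for T z L
  proof -
    have y: "z$2 = unit_slope_point (dlt \<alpha> \<beta>)" and cos: "cos (2 * \<omega> * z$1) = 0"
      using double d double_eig_one_GT_derivative_iff[OF z K _ _ nonzero L] by auto
    show ?thesis
      using cos_eq_0_iff_extremal_forcing[OF nonzero(2,3) M] GT_fixed_point_forcing_eq_Mc[OF K _ fixed y]
        GT_fixed_point_eq_unit_slope_point_iff[OF K _ _ z fixed] cos y d by simp
  qed
  ultimately show ?thesis by blast
qed

end
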